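(* Let $0\le a<b$, $1<\alpha\le 2$, and let $q:[a,b]\to\mathbb{R}$ be continuous. Suppose the fractional boundary value problem $${}^{CF}D_a^{\alpha}u(t)+q(t)u(t)=0,\quad a<t<b,\qquad u(a)=u(b)=0,$$ has a nontrivial solution. Then $$\int_a^b|q(t)|\,dt\ \ge\ \begin{cases}\dfrac{1}{2-\alpha}, & \text{if } b-a<\dfrac{2-\alpha}{\alpha-1},\\[3mm] \dfrac{4(\alpha-1)(b-a)}{[(\alpha-1)(b-a)+(2-\alpha)]^2}, & \text{if } b-a\ge\dfrac{2-\alpha}{\alpha-1}.\end{cases}$$
   Context: ${}^{CF}D_a^{\alpha}$ denotes the Caputo–Fabrizio fractional derivative of order $\alpha\in(1,2]$ with lower terminal $a$: for a twice continuously differentiable $u$ on $[a,b]$ and $1<\alpha<2$, ${}^{CF}D_a^{\alpha}u(t)=\frac{1}{2-\alpha}\int_a^t \exp\!\big(-\frac{\alpha-1}{2-\alpha}(t-s)\big)u''(s)\,ds$, and for $\alpha=2$ it is $u''(t)$. A solution means a twice continuously differentiable function $u$ on $[a,b]$ satisfying the equation and boundary conditions; nontrivial means not identically zero. (The problem is equivalent to $u(t)=\int_a^b G(t,s)q(s)u(s)\,ds$ with $G(t,s)=\frac{b-t}{b-a}[(\alpha-1)(s-a)-2+\alpha]$ for $a\le s\le t\le b$ and $G(t,s)=\frac{t-a}{b-a}[(\alpha-1)(b-s)+2-\alpha]$ for $a\le t\le s\le b$.) *)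

theory Defs
  imports "HOL-Analysis.Analysis"
begin

definition C2_on :: "real \<Rightarrow> real \<Rightarrow> (real \<Rightarrow> real) \<Rightarrow> (real \<Rightarrow> real) \<Rightarrow> (real \<Rightarrow> real) \<Rightarrow> bool" where
  "C2_on a b u u1 u2 \<longleftrightarrow>
     (\<forall>t\<in>{a..b}. (u has_real_derivative u1 t) (at t within {a..b})) \<and>
     (\<forall>t\<in>{a..b}. (u1 has_real_derivative u2 t) (at t within {a..b})) \<and>
     continuous_on {a..b} u2"

text \<open>Caputo--Fabrizio derivative of order alpha in (1,2], expressed via the second
  derivative u2 of u.\<close>
definition CF_deriv :: "real \<Rightarrow> real \<Rightarrow> (real \<Rightarrow> real) \<Rightarrow> real \<Rightarrow> real" where
  "CF_deriv \<alpha> a u2 t =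
     (if \<alpha> = 2 then u2 t
      else (1 / (2 - \<alpha>)) * integral {a..t} (\<lambda>s. exp (- ((\<alpha> - 1) / (2 - \<alpha>)) * (t - s)) * u2 s))"

end

theory Submission
  imports Defs
begin

text \<open>
  Write c for the Caputo--Fabrizio derivative of u. Its exponential kernel makes c solve
  (2 - \<alpha>) c' + (\<alpha> - 1) c = u'' with (2 - \<alpha>) c(a) = 0, so integrating twice gives
  u(t) = u(a) + u'(a) (t - a) + \<integral>[a,t] ((2 - \<alpha>) + (\<alpha> - 1) (t - s)) c(s) ds.
  Inserting c = -q u and the boundary conditions yields u(t) = \<integral>[a,b] G(t,s) q(s) u(s) ds.
  At a point where |u| is maximal this gives 1 \<le> max |G| \<integral>[a,b] |q|, and max |G| is
  the reciprocal of the stated bound.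
\<close>

lemma CF_deriv_eq_exp_integral:
  assumes "\<alpha> \<noteq> 2"
  defines "k \<equiv> (\<alpha> - 1) / (2 - \<alpha>)"
  shows "(2 - \<alpha>) * CF_deriv \<alpha> a u2 t = exp (- k * t) * integral {a..t} (\<lambda>s. exp (k * s) * u2 s)"
proof -
  have "(\<lambda>s. exp (- k * (t - s)) * u2 s) = (\<lambda>s. exp (- k * t) * (exp (k * s) * u2 s))"
    by (simp add: mult_exp_exp algebra_simps)
  then show ?thesis
    using assms by (simp add: CF_deriv_def k_def)
qed

lemma scaled_CF_deriv_has_real_derivative:
  assumes "continuous_on {a..b} u2" "t \<in> {a..b}"
  shows "((\<lambda>t. (2 - \<alpha>) * CF_deriv \<alpha> a u2 t) has_real_derivative u2 t - (\<alpha> - 1) * CF_deriv \<alpha> a u2 t)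
           (at t within {a..b})"
proof (cases "\<alpha> = 2")
  case True
  then show ?thesis by (simp add: CF_deriv_def)
next
  case False
  define k where "k = (\<alpha> - 1) / (2 - \<alpha>)"
  define E where "E t = integral {a..t} (\<lambda>s. exp (k * s) * u2 s)" for t
  have CF_eq: "(\<lambda>t. (2 - \<alpha>) * CF_deriv \<alpha> a u2 t) = (\<lambda>t. exp (- k * t) * E t)"
    using CF_deriv_eq_exp_integral[OF False] by (simp add: k_def E_def)
  have "(E has_real_derivative exp (k * t) * u2 t) (at t within {a..b})"
    unfolding E_def using assms by (intro integral_has_real_derivative continuous_intros)
  then have "((\<lambda>t. exp (- k * t) * E t) has_real_derivative u2 t - k * (exp (- k * t) * E t))
               (at t within {a..b})"
    by (auto intro!: derivative_eq_intros simp: mult_exp_exp algebra_simps)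
  moreover have "k * (exp (- k * t) * E t) = k * (2 - \<alpha>) * CF_deriv \<alpha> a u2 t"
    using fun_cong[OF CF_eq, of t] by simp
  moreover have "k * (2 - \<alpha>) = \<alpha> - 1"
    using False by (simp add: k_def)
  ultimately show ?thesis
    unfolding CF_eq by simp
qed

lemma continuous_on_CF_deriv:
  assumes "continuous_on {a..b} u2"
  shows "continuous_on {a..b} (CF_deriv \<alpha> a u2)"
proof (cases "\<alpha> = 2")
  case True
  then show ?thesis using assms by (simp add: CF_deriv_def)
next
  case False
  have "continuous_on {a..b} (\<lambda>t. (2 - \<alpha>) * CF_deriv \<alpha> a u2 t)"
    using scaled_CF_deriv_has_real_derivative[OF assms] by (rule DERIV_continuous_on)
  then have "continuous_on {a..b} (\<lambda>t. inverse (2 - \<alpha>) * ((2 - \<alpha>) * CF_deriv \<alpha> a u2 t))"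
    by (rule continuous_on_mult_left)
  then show ?thesis
    using False by (simp add: mult.assoc[symmetric])
qed

lemma CF_deriv_first_integral:
  assumes "\<And>t. t \<in> {a..b} \<Longrightarrow> (u1 has_real_derivative u2 t) (at t within {a..b})"
    and "continuous_on {a..b} u2" and "t \<in> {a..b}"
  shows "u1 t - u1 a = (2 - \<alpha>) * CF_deriv \<alpha> a u2 t + (\<alpha> - 1) * integral {a..t} (CF_deriv \<alpha> a u2)"
proof -
  define F where "F t = (2 - \<alpha>) * CF_deriv \<alpha> a u2 t + (\<alpha> - 1) * integral {a..t} (CF_deriv \<alpha> a u2) - u1 t"
    for t
  have "(F has_real_derivative 0) (at x within {a..b})" if x: "x \<in> {a..b}" for x
  proof -
    have "((\<lambda>t. integral {a..t} (CF_deriv \<alpha> a u2)) has_real_derivative CF_deriv \<alpha> a u2 x)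
            (at x within {a..b})"
      using continuous_on_CF_deriv[OF assms(2)] x by (rule integral_has_real_derivative)
    from DERIV_diff[OF DERIV_add[OF scaled_CF_deriv_has_real_derivative[OF assms(2) x, where \<alpha> = \<alpha>]
          DERIV_cmult[OF this, where c = "\<alpha> - 1"]] assms(1)[OF x]]
    show ?thesis
      unfolding F_def by simp
  qed
  then obtain c where "\<forall>x\<in>{a..b}. F x = c"
    using has_field_derivative_zero_constant[of "{a..b}" F] by auto
  then have "F t = F a"
    using assms(3) by auto
  moreover have "(2 - \<alpha>) * CF_deriv \<alpha> a u2 a = 0"
    by (simp add: CF_deriv_def)
  ultimately show ?thesis
    by (simp add: F_def)
qed

lemma affine_volterra_has_real_derivative:
  fixes f :: "real \<Rightarrow> real"
  assumes "continuous_on {a..b} f" and "t \<in> {a..b}"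
  shows "((\<lambda>x. integral {a..x} (\<lambda>s. (\<beta> + \<gamma> * (x - s)) * f s)) has_real_derivative
           \<beta> * f t + \<gamma> * integral {a..t} f) (at t within {a..b})"
proof (rule has_field_derivative_transform_within[where d = 1])
  let ?P = "\<lambda>x. integral {a..x} f" and ?S = "\<lambda>x. integral {a..x} (\<lambda>s. s * f s)"
  have sf: "continuous_on {a..b} (\<lambda>s. s * f s)"
    using assms(1) by (intro continuous_on_mult continuous_on_id)
  have "((\<lambda>x. (\<beta> + \<gamma> * x) * ?P x - \<gamma> * ?S x) has_real_derivative
          \<gamma> * ?P t + (\<beta> + \<gamma> * t) * f t - \<gamma> * (t * f t)) (at t within {a..b})"
    using integral_has_real_derivative[OF assms] integral_has_real_derivative[OF sf assms(2)]
    by (auto intro!: derivative_eq_intros)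
  then show "((\<lambda>x. (\<beta> + \<gamma> * x) * ?P x - \<gamma> * ?S x) has_real_derivative
          \<beta> * f t + \<gamma> * ?P t) (at t within {a..b})"
    by (simp add: algebra_simps)
  show "(\<beta> + \<gamma> * x) * ?P x - \<gamma> * ?S x = integral {a..x} (\<lambda>s. (\<beta> + \<gamma> * (x - s)) * f s)"
    if "x \<in> {a..b}" for x
  proof -
    have sub: "{a..x} \<subseteq> {a..b}"
      using that by auto
    have "f integrable_on {a..x}" and "(\<lambda>s. s * f s) integrable_on {a..x}"
      using integrable_continuous_real[OF continuous_on_subset[OF assms(1) sub]]
        integrable_continuous_real[OF continuous_on_subset[OF sf sub]] .
    then have "((\<lambda>s. (\<beta> + \<gamma> * x) * f s - \<gamma> * (s * f s)) has_integral
                 (\<beta> + \<gamma> * x) * ?P x - \<gamma> * ?S x) {a..x}"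
      by (intro has_integral_diff has_integral_mult_right integrable_integral)
    then show ?thesis
      by (simp add: integral_unique algebra_simps)
  qed
qed (use assms in auto)

lemma C2_on_CF_integral_representation:
  assumes "C2_on a b u u1 u2" and "t \<in> {a..b}"
  shows "u t = u a + u1 a * (t - a)
           + integral {a..t} (\<lambda>s. ((2 - \<alpha>) + (\<alpha> - 1) * (t - s)) * CF_deriv \<alpha> a u2 s)"
proof -
  have du: "\<And>t. t \<in> {a..b} \<Longrightarrow> (u has_real_derivative u1 t) (at t within {a..b})"
    and du1: "\<And>t. t \<in> {a..b} \<Longrightarrow> (u1 has_real_derivative u2 t) (at t within {a..b})"
    and cu2: "continuous_on {a..b} u2"
    using assms(1) unfolding C2_on_def by auto
  define H where "H t = u t - u1 a * (t - a)
           - integral {a..t} (\<lambda>s. ((2 - \<alpha>) + (\<alpha> - 1) * (t - s)) * CF_deriv \<alpha> a u2 s)" for t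
  have "(H has_real_derivative 0) (at x within {a..b})" if x: "x \<in> {a..b}" for x
  proof -
    have "((\<lambda>t. u1 a * (t - a)) has_real_derivative u1 a) (at x within {a..b})"
      by (auto intro!: derivative_eq_intros)
    from DERIV_diff[OF DERIV_diff[OF du[OF x] this]
        affine_volterra_has_real_derivative[OF continuous_on_CF_deriv[OF cu2, where \<alpha> = \<alpha>] x,
          where \<beta> = "2 - \<alpha>" and \<gamma> = "\<alpha> - 1"]]
    show ?thesis
      unfolding H_def using CF_deriv_first_integral[OF du1 cu2 x, where \<alpha> = \<alpha>] by simp
  qed
  then obtain c where "\<forall>x\<in>{a..b}. H x = c"
    using has_field_derivative_zero_constant[of "{a..b}" H] by auto
  then have "H t = H a"
    using assms(2) by auto
  then show ?thesis
    by (simp add: H_def)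
qed

text \<open>The paper's two formulas for G disagree on the diagonal s = t when \<alpha> < 2;
  this null set is assigned to the first branch.\<close>

definition CF_green :: "real \<Rightarrow> real \<Rightarrow> real \<Rightarrow> real \<Rightarrow> real \<Rightarrow> real" where
  "CF_green \<alpha> a b t s =
     (if s \<le> t then (b - t) / (b - a) * ((\<alpha> - 1) * (s - a) - (2 - \<alpha>))
      else (t - a) / (b - a) * ((\<alpha> - 1) * (b - s) + (2 - \<alpha>)))"

lemma CF_green_below_diagonal:
  assumes "a < b" and "s \<le> t"
  shows "CF_green \<alpha> a b t s
           = (t - a) / (b - a) * ((2 - \<alpha>) + (\<alpha> - 1) * (b - s)) - ((2 - \<alpha>) + (\<alpha> - 1) * (t - s))"
  using assms by (simp add: CF_green_def field_simps)

lemma CF_bvp_green_representation: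
  assumes "a < b" and "C2_on a b u u1 u2" and "continuous_on {a..b} w"
    and "\<And>t. t \<in> {a<..<b} \<Longrightarrow> CF_deriv \<alpha> a u2 t + w t = 0"
    and "u a = 0" and "u b = 0" and "t \<in> {a..b}"
  shows "u t = integral {a..b} (\<lambda>s. CF_green \<alpha> a b t s * w s)"
proof -
  define K where "K x s = (2 - \<alpha>) + (\<alpha> - 1) * (x - s)" for x s
  define V where "V x = integral {a..x} (\<lambda>s. K x s * w s)" for x
  define r where "r = (t - a) / (b - a)"
  have int: "(\<lambda>s. K x s * w s) integrable_on {c..d}" if "a \<le> c" "d \<le> b" for x c d
    using assms(3) that unfolding K_def
    by (intro integrable_continuous_real continuous_intros) (auto elim: continuous_on_subset)
  have CF_eq: "CF_deriv \<alpha> a u2 s = - w s" if "s \<in> {a<..<b}" for s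
    using assms(4)[OF that] by linarith
  have u_eq: "u x = u1 a * (x - a) - V x" if x: "x \<in> {a..b}" for x
  proof -
    have "integral {a..x} (\<lambda>s. K x s * CF_deriv \<alpha> a u2 s) = integral {a..x} (\<lambda>s. - (K x s * w s))"
      using x by (intro integral_spike[of "{a, b}"]) (auto simp: CF_eq)
    then show ?thesis
      using C2_on_CF_integral_representation[OF assms(2) x, where \<alpha> = \<alpha>] assms(5)
      by (simp add: K_def V_def)
  qed
  have "u1 a = V b / (b - a)"
    using u_eq[of b] assms(1,6) by (simp add: field_simps)
  then have "u t = r * V b - V t"
    using u_eq[OF assms(7)] by (simp add: r_def)
  also have "\<dots> = (r * integral {a..t} (\<lambda>s. K b s * w s) - V t) + r * integral {t..b} (\<lambda>s. K b s * w s)"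
  proof -
    have "V b = integral {a..t} (\<lambda>s. K b s * w s) + integral {t..b} (\<lambda>s. K b s * w s)"
      unfolding V_def using assms(7)
      by (intro Henstock_Kurzweil_Integration.integral_combine[symmetric] int) auto
    then show ?thesis
      by (simp add: algebra_simps)
  qed
  also have "\<dots> = integral {a..b} (\<lambda>s. CF_green \<alpha> a b t s * w s)"
  proof (rule integral_unique[symmetric], rule has_integral_combine)
    show "((\<lambda>s. CF_green \<alpha> a b t s * w s) has_integral r * integral {a..t} (\<lambda>s. K b s * w s) - V t) {a..t}"
    proof (rule has_integral_eq)
      show "((\<lambda>s. r * (K b s * w s) - K t s * w s) has_integral r * integral {a..t} (\<lambda>s. K b s * w s) - V t) {a..t}"
        unfolding V_def using int assms(7)
        by (intro has_integral_diff has_integral_mult_right integrable_integral) auto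
      show "r * (K b s * w s) - K t s * w s = CF_green \<alpha> a b t s * w s" if "s \<in> {a..t}" for s
      proof -
        have "CF_green \<alpha> a b t s = r * K b s - K t s"
          using that by (simp add: CF_green_below_diagonal[OF assms(1)] K_def r_def)
        then show ?thesis
          by (simp add: left_diff_distrib)
      qed
    qed
    show "((\<lambda>s. CF_green \<alpha> a b t s * w s) has_integral r * integral {t..b} (\<lambda>s. K b s * w s)) {t..b}"
    proof (rule has_integral_spike_finite[of "{t}"])
      show "((\<lambda>s. r * (K b s * w s)) has_integral r * integral {t..b} (\<lambda>s. K b s * w s)) {t..b}"
        using int assms(7) by (intro has_integral_mult_right integrable_integral) auto
      show "CF_green \<alpha> a b t s * w s = r * (K b s * w s)" if "s \<in> {t..b} - {t}" for s
        using that by (simp add: CF_green_def K_def r_def add.commute)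
    qed simp
  qed (use assms(7) in auto)
  finally show ?thesis .
qed

text \<open>The maximum of x (\<gamma> + \<beta> (L - x)) / L over 0 \<le> x \<le> L: attained at the vertex
  x = (\<beta> L + \<gamma>) / (2 \<beta>) if L \<ge> \<gamma> / \<beta>, and at x = L otherwise.\<close>

definition lyapunov_constant :: "real \<Rightarrow> real \<Rightarrow> real \<Rightarrow> real" where
  "lyapunov_constant \<beta> \<gamma> L = (if L < \<gamma> / \<beta> then \<gamma> else (\<beta> * L + \<gamma>)\<^sup>2 / (4 * \<beta> * L))"

lemma parabola_le_lyapunov_constant:
  fixes L \<beta> \<gamma> x :: real
  assumes "0 < L" "0 < \<beta>" "0 \<le> \<gamma>" "0 \<le> x" "x \<le> L"
  shows "x * (\<gamma> + \<beta> * (L - x)) / L \<le> lyapunov_constant \<beta> \<gamma> L"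
proof (cases "L < \<gamma> / \<beta>")
  case True
  then have "\<beta> * L < \<gamma>"
    using assms by (simp add: field_simps)
  moreover have "\<beta> * x \<le> \<beta> * L"
    using assms by simp
  ultimately have "0 \<le> (L - x) * (\<gamma> - \<beta> * x)"
    using assms by (intro mult_nonneg_nonneg) linarith+
  then have "x * (\<gamma> + \<beta> * (L - x)) \<le> \<gamma> * L"
    by (simp add: algebra_simps)
  then show ?thesis
    using True assms by (simp add: lyapunov_constant_def divide_le_eq)
next
  case False
  have "(\<beta> * L + \<gamma> - 2 * \<beta> * x)\<^sup>2 = (\<beta> * L + \<gamma>)\<^sup>2 - 4 * \<beta> * (x * (\<gamma> + \<beta> * (L - x)))"
    by (simp add: power2_eq_square algebra_simps)
  then have "4 * \<beta> * (x * (\<gamma> + \<beta> * (L - x))) \<le> (\<beta> * L + \<gamma>)\<^sup>2"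
    using zero_le_power2[of "\<beta> * L + \<gamma> - 2 * \<beta> * x"] by linarith
  then have "x * (\<gamma> + \<beta> * (L - x)) \<le> (\<beta> * L + \<gamma>)\<^sup>2 / (4 * \<beta>)"
    using assms by (simp add: field_simps)
  then have "x * (\<gamma> + \<beta> * (L - x)) / L \<le> (\<beta> * L + \<gamma>)\<^sup>2 / (4 * \<beta>) / L"
    by (rule divide_right_mono) (use assms in simp)
  then show ?thesis
    using False by (simp add: lyapunov_constant_def)
qed

lemma le_lyapunov_constant:
  fixes L \<beta> \<gamma> :: real
  assumes "0 < L" "0 < \<beta>"
  shows "\<gamma> \<le> lyapunov_constant \<beta> \<gamma> L"
proof -
  have "4 * \<beta> * L * \<gamma> \<le> (\<beta> * L + \<gamma>)\<^sup>2"
    using zero_le_power2[of "\<beta> * L - \<gamma>"] by (simp add: power2_eq_square algebra_simps)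
  then show ?thesis
    using assms by (simp add: lyapunov_constant_def field_simps)
qed

lemma abs_right_branch_le_lyapunov_constant:
  fixes L \<beta> \<gamma> x y :: real
  assumes "0 < L" "0 < \<beta>" "0 \<le> \<gamma>" "0 \<le> x" "x \<le> y" "y \<le> L"
  shows "\<bar>x / L * (\<beta> * (L - y) + \<gamma>)\<bar> \<le> lyapunov_constant \<beta> \<gamma> L"
proof -
  have "0 \<le> \<beta> * (L - y) + \<gamma>" and "\<beta> * (L - y) + \<gamma> \<le> \<gamma> + \<beta> * (L - x)"
    using assms by (simp_all add: mult_left_mono)
  then have "\<bar>x / L * (\<beta> * (L - y) + \<gamma>)\<bar> \<le> x * (\<gamma> + \<beta> * (L - x)) / L"
    using assms by (simp add: abs_mult divide_right_mono mult_left_mono)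
  also have "\<dots> \<le> lyapunov_constant \<beta> \<gamma> L"
    using assms by (intro parabola_le_lyapunov_constant) auto
  finally show ?thesis .
qed

lemma abs_left_branch_le_lyapunov_constant:
  fixes L \<beta> \<gamma> x y :: real
  assumes "0 < L" "0 < \<beta>" "0 \<le> \<gamma>" "0 \<le> y" "y \<le> x" "x \<le> L"
  shows "\<bar>(L - x) / L * (\<beta> * y - \<gamma>)\<bar> \<le> lyapunov_constant \<beta> \<gamma> L"
proof (cases "\<beta> * y \<le> \<gamma>")
  case True
  have "(L - x) * (\<gamma> - \<beta> * y) \<le> L * \<gamma>"
    using assms True by (intro mult_mono) auto
  then have "\<bar>(L - x) / L * (\<beta> * y - \<gamma>)\<bar> \<le> \<gamma>"
    using assms True by (simp add: abs_mult abs_minus_commute divide_le_eq mult.commute)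
  also have "\<dots> \<le> lyapunov_constant \<beta> \<gamma> L"
    using assms by (intro le_lyapunov_constant)
  finally show ?thesis .
next
  case False
  have "\<beta> * y \<le> \<beta> * x"
    using assms by simp
  then have "(L - x) * (\<beta> * y - \<gamma>) \<le> (L - x) * (\<beta> * x)"
    using assms by (intro mult_left_mono) linarith+
  also have "\<dots> \<le> x * (\<gamma> + \<beta> * (L - x))"
    using assms by (simp add: algebra_simps)
  finally have "\<bar>(L - x) / L * (\<beta> * y - \<gamma>)\<bar> \<le> x * (\<gamma> + \<beta> * (L - x)) / L"
    using assms False by (simp add: abs_mult divide_right_mono)
  also have "\<dots> \<le> lyapunov_constant \<beta> \<gamma> L"
    using assms by (intro parabola_le_lyapunov_constant) auto
  finally show ?thesis .
qed

lemma abs_CF_green_le: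
  assumes "a < b" "1 < \<alpha>" "\<alpha> \<le> 2" "t \<in> {a..b}" "s \<in> {a..b}"
  shows "\<bar>CF_green \<alpha> a b t s\<bar> \<le> lyapunov_constant (\<alpha> - 1) (2 - \<alpha>) (b - a)"
proof (cases "s \<le> t")
  case True
  then have "CF_green \<alpha> a b t s = ((b - a) - (t - a)) / (b - a) * ((\<alpha> - 1) * (s - a) - (2 - \<alpha>))"
    by (simp add: CF_green_def)
  then show ?thesis
    using assms True by (simp only:) (rule abs_left_branch_le_lyapunov_constant; simp)
next
  case False
  then have "CF_green \<alpha> a b t s = (t - a) / (b - a) * ((\<alpha> - 1) * ((b - a) - (s - a)) + (2 - \<alpha>))"
    by (simp add: CF_green_def)
  then show ?thesis
    using assms False by (simp only:) (rule abs_right_branch_le_lyapunov_constant; simp)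
qed

lemma lyapunov_inequality:
  fixes u q :: "real \<Rightarrow> real" and G :: "real \<Rightarrow> real \<Rightarrow> real"
  assumes "continuous_on {a..b} u" and "continuous_on {a..b} q"
    and "\<And>t. t \<in> {a..b} \<Longrightarrow> u t = integral {a..b} (\<lambda>s. G t s * (q s * u s))"
    and "\<And>t s. t \<in> {a..b} \<Longrightarrow> s \<in> {a..b} \<Longrightarrow> \<bar>G t s\<bar> \<le> M"
    and "t0 \<in> {a..b}" and "u t0 \<noteq> 0"
  shows "1 \<le> M * integral {a..b} (\<lambda>s. \<bar>q s\<bar>)"
proof -
  have "continuous_on {a..b} (\<lambda>s. \<bar>u s\<bar>)"
    using assms(1) by (intro continuous_intros)
  then obtain t1 where t1: "t1 \<in> {a..b}" and max: "\<And>s. s \<in> {a..b} \<Longrightarrow> \<bar>u s\<bar> \<le> \<bar>u t1\<bar>"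
    using continuous_attains_sup[OF compact_Icc] assms(5) by blast
  define N where "N = \<bar>u t1\<bar>"
  have "0 < N"
    using max[OF assms(5)] assms(6) by (simp add: N_def)
  have "0 \<le> M"
    using assms(4)[OF assms(5) assms(5)] by linarith
  have bound: "\<bar>G t1 s * (q s * u s)\<bar> \<le> M * N * \<bar>q s\<bar>" if "s \<in> {a..b}" for s
  proof -
    have "\<bar>G t1 s\<bar> * \<bar>u s\<bar> \<le> M * N"
      using assms(4)[OF t1 that] max[OF that] \<open>0 \<le> M\<close> by (simp add: N_def mult_mono)
    then have "\<bar>G t1 s\<bar> * \<bar>u s\<bar> * \<bar>q s\<bar> \<le> M * N * \<bar>q s\<bar>"
      by (rule mult_right_mono) simp
    then show ?thesis
      by (simp add: abs_mult ac_simps)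
  qed
  have int_q: "(\<lambda>s. M * N * \<bar>q s\<bar>) integrable_on {a..b}"
    using assms(2) by (intro integrable_continuous_real continuous_intros)
  have "\<bar>integral {a..b} (\<lambda>s. G t1 s * (q s * u s))\<bar> \<le> integral {a..b} (\<lambda>s. M * N * \<bar>q s\<bar>)"
  proof (cases "(\<lambda>s. G t1 s * (q s * u s)) integrable_on {a..b}")
    case True
    then show ?thesis
      using integral_norm_bound_integral[OF True int_q] bound by simp
  next
    case False
    have "0 \<le> integral {a..b} (\<lambda>s. M * N * \<bar>q s\<bar>)"
      using \<open>0 \<le> M\<close> \<open>0 < N\<close> by (intro integral_nonneg int_q) simp
    then show ?thesis
      using False by (simp add: not_integrable_integral)
  qed
  then have "N * 1 \<le> N * (M * integral {a..b} (\<lambda>s. \<bar>q s\<bar>))"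
    using assms(3)[OF t1] by (simp add: N_def algebra_simps)
  then show ?thesis
    using \<open>0 < N\<close> by (simp only: mult_le_cancel_left_pos)
qed

theorem theorem2:
  fixes a b \<alpha> :: real and q :: "real \<Rightarrow> real"
  assumes "0 \<le> a" and "a < b" and "1 < \<alpha>" and "\<alpha> \<le> 2"
    and "continuous_on {a..b} q"
    and "\<exists>u u1 u2. C2_on a b u u1 u2 \<and>
           (\<forall>t\<in>{a<..<b}. CF_deriv \<alpha> a u2 t + q t * u t = 0) \<and>
           u a = 0 \<and> u b = 0 \<and> (\<exists>t\<in>{a..b}. u t \<noteq> 0)"
  shows "integral {a..b} (\<lambda>t. \<bar>q t\<bar>) \<ge>
           (if b - a < (2 - \<alpha>) / (\<alpha> - 1) then 1 / (2 - \<alpha>)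
            else 4 * (\<alpha> - 1) * (b - a) / ((\<alpha> - 1) * (b - a) + (2 - \<alpha>))^2)"
proof -
  obtain u u1 u2 t0 where C2: "C2_on a b u u1 u2"
    and eq: "\<And>t. t \<in> {a<..<b} \<Longrightarrow> CF_deriv \<alpha> a u2 t + q t * u t = 0"
    and bc: "u a = 0" "u b = 0" and t0: "t0 \<in> {a..b}" "u t0 \<noteq> 0"
    using assms(6) by blast
  define M where "M = lyapunov_constant (\<alpha> - 1) (2 - \<alpha>) (b - a)"
  have cu: "continuous_on {a..b} u"
    using C2 DERIV_continuous_on unfolding C2_on_def by blast
  have "1 \<le> M * integral {a..b} (\<lambda>s. \<bar>q s\<bar>)"
  proof (rule lyapunov_inequality[OF cu assms(5) _ _ t0])
    show "u t = integral {a..b} (\<lambda>s. CF_green \<alpha> a b t s * (q s * u s))" if "t \<in> {a..b}" for t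
      using CF_bvp_green_representation[OF assms(2) C2 continuous_on_mult[OF assms(5) cu] eq bc that] .
    show "\<bar>CF_green \<alpha> a b t s\<bar> \<le> M" if "t \<in> {a..b}" "s \<in> {a..b}" for t s
      unfolding M_def using assms(2-4) that by (rule abs_CF_green_le)
  qed
  moreover have "0 \<le> M"
    using abs_CF_green_le[of a b \<alpha> a a] assms(2-4) unfolding M_def by fastforce
  ultimately have "1 / M \<le> integral {a..b} (\<lambda>s. \<bar>q s\<bar>)"
    by (cases "M = 0") (auto simp: divide_le_eq mult.commute)
  moreover have "1 / M = (if b - a < (2 - \<alpha>) / (\<alpha> - 1) then 1 / (2 - \<alpha>)
            else 4 * (\<alpha> - 1) * (b - a) / ((\<alpha> - 1) * (b - a) + (2 - \<alpha>))^2)"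
    by (simp add: M_def lyapunov_constant_def algebra_simps)
  ultimately show ?thesis
    by simp
qed

end
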